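(* Fix integers $m\ge 1$ and $n\ge 0$. There is a function $P_{n,m}:\mathbb{Z}_{\ge 0}\to\mathbb{Q}$ (in fact a polynomial) depending only on $n$ and $m$ with the following property. For every set $a=\{a_1,\dots,a_m\}$ of $m$ multiplicatively independent integers $a_i\ge 2$, there is $N=N(n,a)$ such that for every $s\ge 1$ and all positive integers $k_1,\dots,k_s$ for which $k_1+1,\dots,k_s+1$ are primes larger than $N$, the number of $n$-element independent sets of the disjoint union $G(a,k_1)+G(a,k_2)+\cdots+G(a,k_s)$ equals $P_{n,m}(k_1+\cdots+k_s)$. In other words, this number depends only on $n$, $m$ and $\sum_i k_i$.
   Context: A set $\{a_1,\dots,a_m\}$ of positive integers is multiplicatively independent if $a_1^{i_1}\cdots a_m^{i_m}=1$ with integers $i_1,\dots,i_m$ implies $i_1=\dots=i_m=0$. For such $a$ and a positive integer $k$, $G(a,k)$ is the simple graph with vertex set $\{1,2,\dots,k\}$ in which distinct vertices $i,j$ are adjacent if and only if $i\equiv a_rj\pmod{k+1}$ or $j\equiv a_ri\pmod{k+1}$ for some $1\le r\le m$. $G_1+G_2+\cdots+G_s$ denotes the disjoint union of graphs. An independent set is a set of vertices no two of which are adjacent. *)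

theory Defs
  imports "HOL-Number_Theory.Number_Theory" "HOL-Computational_Algebra.Polynomial"
begin

definition mult_indep :: "nat set \<Rightarrow> bool" where
  "mult_indep A \<longleftrightarrow>
     (\<forall>e :: nat \<Rightarrow> int. (\<Prod>x\<in>A. (of_nat x :: rat) powi e x) = 1 \<longrightarrow> (\<forall>x\<in>A. e x = 0))"

definition G_adj :: "nat set \<Rightarrow> nat \<Rightarrow> nat \<Rightarrow> nat \<Rightarrow> bool" where
  "G_adj A k i j \<longleftrightarrow> i \<noteq> j \<and> i \<in> {1..k} \<and> j \<in> {1..k} \<and>
     (\<exists>r\<in>A. [i = r * j] (mod (k + 1)) \<or> [j = r * i] (mod (k + 1)))"

definition union_verts :: "(nat \<Rightarrow> nat) \<Rightarrow> nat \<Rightarrow> (nat \<times> nat) set" where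
  "union_verts k s = {(t, i). t < s \<and> i \<in> {1..k t}}"

definition union_adj :: "nat set \<Rightarrow> (nat \<Rightarrow> nat) \<Rightarrow> nat \<times> nat \<Rightarrow> nat \<times> nat \<Rightarrow> bool" where
  "union_adj A k v w \<longleftrightarrow> fst v = fst w \<and> G_adj A (k (fst v)) (snd v) (snd w)"

definition num_indep_sets :: "nat set \<Rightarrow> (nat \<Rightarrow> nat) \<Rightarrow> nat \<Rightarrow> nat \<Rightarrow> nat" where
  "num_indep_sets A k s n = card {S. S \<subseteq> union_verts k s \<and> card S = n \<and>
      (\<forall>v\<in>S. \<forall>w\<in>S. \<not> union_adj A k v w)}"

end

theory Submission
  imports Defs "HOL-Library.FuncSet"
begin

text \<open>
  Counting ordered n-tuples of distinct, pairwise non-adjacent vertices and applying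
  inclusion-exclusion over the set F of index pairs that are allowed to be equal or adjacent,
  the problem reduces to counting tuples x with x i, x j equal or adjacent along F.
  In G(a,k) with k+1 prime, j is equal or adjacent to i exactly when j = i a^b in the unit group
  of Z/(k+1) for some b in {0, \<plusminus>e_1, ..., \<plusminus>e_m}, so Z^m acts on the vertices of the
  disjoint union and adjacency follows the unit steps. A tuple constrained along F is then given
  by one free vertex per connected component of F and exponent vectors relating the other
  entries to it. These vectors have entries bounded by n^2, and for primes k+1 beyond a bound N
  the multiplicative independence of a makes the action injective on such vectors. Hence the
  admissible exponent data do not depend on k, and each inclusion-exclusion term is a constant
  times |V|^(number of components), a polynomial in |V| = k_1 + ... + k_s.
\<close>

section \<open>Independent sets by inclusion-exclusion\<close>

lemma card_inj_tuples_onto: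
  assumes "finite S" "card S = n"
  shows "card {x \<in> {..<n} \<rightarrow>\<^sub>E S. inj_on x {..<n}} = fact n"
proof -
  have "card {x \<in> {..<n} \<rightarrow>\<^sub>E S. inj_on x {..<n}}
      = card S ^ (card {..<n} - card {..<n}) * prod ((-) (card S)) {0..<card {..<n}}"
    by (rule card_inj_on_subset_funcset) (use assms in auto)
  also have "\<dots> = fact n"
    using assms(2) by (simp add: fact_prod_rev)
  finally show ?thesis .
qed

lemma card_inj_tuples:
  assumes "finite V"
  shows "card {x \<in> {..<n} \<rightarrow>\<^sub>E V. inj_on x {..<n} \<and> Q (x ` {..<n})}
       = fact n * card {S. S \<subseteq> V \<and> card S = n \<and> Q S}"
proof -
  let ?Fam = "{S. S \<subseteq> V \<and> card S = n \<and> Q S}"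
  let ?T = "\<lambda>S. {x \<in> {..<n} \<rightarrow>\<^sub>E S. inj_on x {..<n}}"
  have finFam: "finite ?Fam"
    using assms by (auto intro: finite_subset[of _ "Pow V"])
  have finS: "finite S" if "S \<in> ?Fam" for S
    using that assms finite_subset by blast
  have image: "x ` {..<n} = S" if "S \<in> ?Fam" "x \<in> ?T S" for x S
  proof (rule card_subset_eq)
    show "finite S" using finS[OF that(1)] .
    show "x ` {..<n} \<subseteq> S" using that(2) by auto
    show "card (x ` {..<n}) = card S" using that by (simp add: card_image)
  qed
  have "{x \<in> {..<n} \<rightarrow>\<^sub>E V. inj_on x {..<n} \<and> Q (x ` {..<n})} = (\<Union>S\<in>?Fam. ?T S)"
  proof (intro equalityI subsetI)
    fix x assume x: "x \<in> {x \<in> {..<n} \<rightarrow>\<^sub>E V. inj_on x {..<n} \<and> Q (x ` {..<n})}"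
    hence "x ` {..<n} \<in> ?Fam" and "x \<in> ?T (x ` {..<n})"
      by (auto simp: card_image PiE_iff)
    thus "x \<in> (\<Union>S\<in>?Fam. ?T S)" by blast
  next
    fix x assume "x \<in> (\<Union>S\<in>?Fam. ?T S)"
    then obtain S where "S \<in> ?Fam" "x \<in> ?T S" by blast
    with image[OF this] show "x \<in> {x \<in> {..<n} \<rightarrow>\<^sub>E V. inj_on x {..<n} \<and> Q (x ` {..<n})}"
      by (auto simp: PiE_iff)
  qed
  also have "card \<dots> = (\<Sum>S\<in>?Fam. card (?T S))"
  proof (rule card_UN_disjoint[OF finFam])
    show "\<forall>S\<in>?Fam. finite (?T S)"
      using finS by (simp add: finite_PiE)
    show "\<forall>S\<in>?Fam. \<forall>S'\<in>?Fam. S \<noteq> S' \<longrightarrow> ?T S \<inter> ?T S' = {}"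
      by (metis (no_types, lifting) IntE disjoint_iff image)
  qed
  also have "\<dots> = (\<Sum>S\<in>?Fam. fact n)"
    using finS by (intro sum.cong refl card_inj_tuples_onto) auto
  finally show ?thesis by simp
qed

lemma card_avoiding_inclusion_exclusion:
  assumes X: "finite X" and P: "finite P"
  shows "int (card {x\<in>X. \<forall>p\<in>P. \<not> R x p})
       = (\<Sum>F\<in>Pow P. (-1) ^ card F * int (card {x\<in>X. \<forall>p\<in>F. R x p}))"
proof -
  define \<chi> where "\<chi> x p = (if R x p then 1 else 0 :: int)" for x p
  have indicator: "(\<Prod>p\<in>F. \<chi> x p) = (if \<forall>p\<in>F. R x p then 1 else 0)" if "finite F" for x F
    using that by (induction F rule: finite_induct) (auto simp: \<chi>_def)
  have count: "int (card {x\<in>X. Q x}) = (\<Sum>x\<in>X. if Q x then 1 else 0)" for Q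
    using X by (simp add: sum.If_cases Int_def conj_commute)
  have "int (card {x\<in>X. \<forall>p\<in>P. \<not> R x p}) = (\<Sum>x\<in>X. \<Prod>p\<in>P. 1 - \<chi> x p)"
  proof -
    have "(\<Prod>p\<in>P. 1 - \<chi> x p) = (if \<forall>p\<in>P. \<not> R x p then 1 else 0)" for x
      using P by (induction P rule: finite_induct) (auto simp: \<chi>_def)
    thus ?thesis by (simp add: count)
  qed
  also have "\<dots> = (\<Sum>x\<in>X. \<Sum>F\<in>Pow P. (-1) ^ card F * (\<Prod>p\<in>F. \<chi> x p))"
  proof (intro sum.cong refl)
    fix x
    have "(\<Prod>p\<in>P. 1 - \<chi> x p) = (\<Prod>p\<in>P. - \<chi> x p + 1)" by simp
    also have "\<dots> = (\<Sum>F\<in>Pow P. (\<Prod>p\<in>F. - \<chi> x p))"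
      using prod_add[OF P, of "\<lambda>p. - \<chi> x p" "\<lambda>_. 1"] by simp
    also have "\<dots> = (\<Sum>F\<in>Pow P. (-1) ^ card F * (\<Prod>p\<in>F. \<chi> x p))"
      by (intro sum.cong refl) (simp add: prod_uminus)
    finally show "(\<Prod>p\<in>P. 1 - \<chi> x p) = \<dots>" .
  qed
  also have "\<dots> = (\<Sum>F\<in>Pow P. (-1) ^ card F * (\<Sum>x\<in>X. \<Prod>p\<in>F. \<chi> x p))"
    by (subst sum.swap) (simp add: sum_distrib_left)
  also have "\<dots> = (\<Sum>F\<in>Pow P. (-1) ^ card F * int (card {x\<in>X. \<forall>p\<in>F. R x p}))"
    using P by (intro sum.cong refl) (simp add: indicator count finite_subset)
  finally show ?thesis .
qed

definition index_pairs :: "nat \<Rightarrow> (nat \<times> nat) set" where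
  "index_pairs n = {(i, j). i < j \<and> j < n}"

lemma finite_index_pairs: "finite (index_pairs n)"
  by (rule finite_subset[of _ "{..<n} \<times> {..<n}"]) (auto simp: index_pairs_def)

lemma fact_mult_card_indep_sets:
  fixes adj :: "'a \<Rightarrow> 'a \<Rightarrow> bool"
  assumes "finite V" and adj_sym: "\<And>v w. adj v w \<Longrightarrow> adj w v" and adj_irrefl: "\<And>v. \<not> adj v v"
  shows "int (fact n * card {S. S \<subseteq> V \<and> card S = n \<and> (\<forall>v\<in>S. \<forall>w\<in>S. \<not> adj v w)})
       = (\<Sum>F\<in>Pow (index_pairs n). (-1) ^ card F *
            int (card {x \<in> {..<n} \<rightarrow>\<^sub>E V. \<forall>(i, j)\<in>F. x i = x j \<or> adj (x i) (x j)}))"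
proof -
  let ?R = "\<lambda>x (i, j). x i = x j \<or> adj (x i) (x j)"
  have "inj_on x {..<n} \<and> (\<forall>v\<in>x ` {..<n}. \<forall>w\<in>x ` {..<n}. \<not> adj v w)
        \<longleftrightarrow> (\<forall>p\<in>index_pairs n. \<not> ?R x p)" for x
  proof
    assume "\<forall>p\<in>index_pairs n. \<not> ?R x p"
    hence "x i \<noteq> x j \<and> \<not> adj (x i) (x j)" if "i < j" "j < n" for i j
      using that by (auto simp: index_pairs_def)
    hence distinct: "x i \<noteq> x j \<and> \<not> adj (x i) (x j)" if "i < n" "j < n" "i \<noteq> j" for i j
      using that adj_sym by (metis linorder_neqE_nat)
    show "inj_on x {..<n} \<and> (\<forall>v\<in>x ` {..<n}. \<forall>w\<in>x ` {..<n}. \<not> adj v w)"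
    proof
      show "inj_on x {..<n}"
        using distinct by (auto simp: inj_on_def)
      show "\<forall>v\<in>x ` {..<n}. \<forall>w\<in>x ` {..<n}. \<not> adj v w"
        using distinct adj_irrefl by fastforce
    qed
  qed (auto simp: index_pairs_def inj_on_def)
  hence "fact n * card {S. S \<subseteq> V \<and> card S = n \<and> (\<forall>v\<in>S. \<forall>w\<in>S. \<not> adj v w)}
       = card {x \<in> {..<n} \<rightarrow>\<^sub>E V. \<forall>p\<in>index_pairs n. \<not> ?R x p}"
    using card_inj_tuples[OF assms(1), of n "\<lambda>S. \<forall>v\<in>S. \<forall>w\<in>S. \<not> adj v w"] by simp
  thus ?thesis
    using card_avoiding_inclusion_exclusion[OF _ finite_index_pairs, where X = "{..<n} \<rightarrow>\<^sub>E V" and R = ?R] assms(1)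
    by (simp add: finite_PiE case_prod_beta')
qed

section \<open>Connected components of a graph on {..<n}\<close>

definition comp_root :: "(nat \<times> nat) set \<Rightarrow> nat \<Rightarrow> nat" where
  "comp_root F i = (LEAST j. (j, i) \<in> (F \<union> F\<inverse>)\<^sup>*)"

definition comp_roots :: "nat \<Rightarrow> (nat \<times> nat) set \<Rightarrow> nat set" where
  "comp_roots n F = {i. i < n \<and> comp_root F i = i}"

lemma comp_root_linked: "(comp_root F i, i) \<in> (F \<union> F\<inverse>)\<^sup>*"
  unfolding comp_root_def by (rule LeastI[of _ i]) simp

lemma comp_root_le: "comp_root F i \<le> i"
  unfolding comp_root_def by (rule Least_le) simp

lemma comp_root_eq:
  assumes "(i, j) \<in> (F \<union> F\<inverse>)\<^sup>*"
  shows "comp_root F i = comp_root F j"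
proof -
  have "sym ((F \<union> F\<inverse>)\<^sup>*)"
    by (rule sym_rtrancl) (auto simp: sym_def)
  hence "(z, i) \<in> (F \<union> F\<inverse>)\<^sup>* \<longleftrightarrow> (z, j) \<in> (F \<union> F\<inverse>)\<^sup>*" for z
    using assms by (meson rtrancl_trans symD)
  thus ?thesis
    unfolding comp_root_def by simp
qed

lemma comp_root_idem: "comp_root F (comp_root F i) = comp_root F i"
  using comp_root_eq[OF comp_root_linked] by simp

lemma comp_root_edge: "(i, j) \<in> F \<Longrightarrow> comp_root F i = comp_root F j"
  by (rule comp_root_eq) auto

lemma comp_root_in_roots: "i < n \<Longrightarrow> comp_root F i \<in> comp_roots n F"
  using comp_root_le[of F i] comp_root_idem[of F i] by (auto simp: comp_roots_def)

lemma finite_comp_roots: "finite (comp_roots n F)"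
  by (simp add: comp_roots_def)

lemma linked_by_short_path:
  assumes "F \<subseteq> index_pairs n" "(i, j) \<in> (F \<union> F\<inverse>)\<^sup>*"
  shows "\<exists>l\<le>n * n. (i, j) \<in> (F \<union> F\<inverse>) ^^ l"
proof -
  have sub: "F \<union> F\<inverse> \<subseteq> {..<n} \<times> {..<n}"
    using assms(1) by (auto simp: index_pairs_def)
  hence "card (F \<union> F\<inverse>) \<le> n * n"
    using card_mono[OF _ sub] by (simp add: card_cartesian_product)
  moreover have "finite (F \<union> F\<inverse>)"
    using sub by (rule finite_subset) auto
  hence "(i, j) \<in> (\<Union>l\<in>{l. l \<le> card (F \<union> F\<inverse>)}. (F \<union> F\<inverse>) ^^ l)"
    using assms(2) by (simp only: rtrancl_finite_eq_relpow)
  ultimately show ?thesis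
    by (auto intro: le_trans)
qed

section \<open>Locally free actions of Z^m\<close>

definition in_box :: "nat \<Rightarrow> nat \<Rightarrow> (nat \<Rightarrow> int) \<Rightarrow> bool" where
  "in_box m c v \<longleftrightarrow> (\<forall>r<m. \<bar>v r\<bar> \<le> int c)"

lemma in_box_zero: "in_box m c (\<lambda>_. 0)"
  by (simp add: in_box_def)

lemma in_box_add: "in_box m c v \<Longrightarrow> in_box m d u \<Longrightarrow> in_box m (c + d) (\<lambda>r. v r + u r)"
  unfolding in_box_def by (smt (verit) of_nat_add)

lemma in_box_uminus: "in_box m c v \<Longrightarrow> in_box m c (\<lambda>r. - v r)"
  by (simp add: in_box_def)

lemma in_box_mono: "in_box m c v \<Longrightarrow> c \<le> d \<Longrightarrow> in_box m d v"
  unfolding in_box_def by force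

text \<open>The offsets of a tuple constrained along F: w i carries the root of the component of i
  to the i-th entry. Path lengths in F, and hence the entries, are bounded by n * n.\<close>

definition offsets :: "nat \<Rightarrow> nat \<Rightarrow> (nat \<Rightarrow> int) set \<Rightarrow> (nat \<times> nat) set \<Rightarrow> (nat \<Rightarrow> nat \<Rightarrow> int) set" where
  "offsets m n B F = {w \<in> {..<n} \<rightarrow>\<^sub>E ({..<m} \<rightarrow>\<^sub>E {- int (n * n)..int (n * n)}).
     (\<forall>i\<in>comp_roots n F. \<forall>r<m. w i r = 0) \<and> (\<forall>(i, j)\<in>F. \<exists>b\<in>B. \<forall>r<m. w j r = w i r + b r)}"

lemma offsets_in_box: "w \<in> offsets m n B F \<Longrightarrow> i < n \<Longrightarrow> in_box m (n * n) (w i)"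
  by (force simp: offsets_def in_box_def PiE_iff)

text \<open>Exponent vectors are functions nat \<Rightarrow> int of which only the entries below m matter.\<close>

locale locally_free_action =
  fixes V :: "'a set" and act :: "'a \<Rightarrow> (nat \<Rightarrow> int) \<Rightarrow> 'a"
    and m M :: nat and B :: "(nat \<Rightarrow> int) set"
  assumes act_in: "x \<in> V \<Longrightarrow> act x v \<in> V"
    and act_cong: "(\<And>r. r < m \<Longrightarrow> v r = u r) \<Longrightarrow> act x v = act x u"
    and act_zero: "x \<in> V \<Longrightarrow> act x (\<lambda>_. 0) = x"
    and act_add: "x \<in> V \<Longrightarrow> act (act x v) u = act x (\<lambda>r. v r + u r)"
    and act_free: "x \<in> V \<Longrightarrow> in_box m M v \<Longrightarrow> in_box m M u \<Longrightarrow> act x v = act x u \<Longrightarrow> \<forall>r<m. v r = u r"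
    and gens_in_box: "b \<in> B \<Longrightarrow> in_box m 1 b"
begin

lemma act_trivial: "x \<in> V \<Longrightarrow> (\<And>r. r < m \<Longrightarrow> v r = 0) \<Longrightarrow> act x v = x"
  using act_cong[of v "\<lambda>_. 0"] act_zero by simp

lemma act_inverse: "x \<in> V \<Longrightarrow> act (act x v) (\<lambda>r. - v r) = x"
  by (simp add: act_add act_trivial)

definition constrained :: "nat \<Rightarrow> (nat \<times> nat) set \<Rightarrow> (nat \<Rightarrow> 'a) set" where
  "constrained n F = {x \<in> {..<n} \<rightarrow>\<^sub>E V. \<forall>(i, j)\<in>F. \<exists>b\<in>B. act (x i) b = x j}"

definition tuple_of :: "nat \<Rightarrow> (nat \<times> nat) set \<Rightarrow> (nat \<Rightarrow> 'a) \<Rightarrow> (nat \<Rightarrow> nat \<Rightarrow> int) \<Rightarrow> nat \<Rightarrow> 'a" where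
  "tuple_of n F y w = (\<lambda>i\<in>{..<n}. act (y (comp_root F i)) (w i))"

lemma path_in_box:
  assumes F: "F \<subseteq> index_pairs n" and x: "x \<in> constrained n F" and i: "i < n"
  shows "(i, j) \<in> (F \<union> F\<inverse>) ^^ l \<Longrightarrow> \<exists>v. in_box m l v \<and> act (x i) v = x j"
proof (induction l arbitrary: j)
  case 0
  hence "j = i" by simp
  moreover have "x i \<in> V"
    using x i by (auto simp: constrained_def)
  ultimately show ?case
    using act_zero in_box_zero by blast
next
  case (Suc l)
  then obtain z where iz: "(i, z) \<in> (F \<union> F\<inverse>) ^^ l" and zj: "(z, j) \<in> F \<union> F\<inverse>"
    by auto
  obtain v where v: "in_box m l v" "act (x i) v = x z"
    using Suc.IH[OF iz] by blast
  have "z < n" "j < n"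
    using zj F by (auto simp: index_pairs_def)
  hence xV: "x i \<in> V" "x z \<in> V" "x j \<in> V"
    using x i by (auto simp: constrained_def)
  have "\<exists>b. in_box m 1 b \<and> act (x z) b = x j"
  proof (cases "(z, j) \<in> F")
    case True
    then obtain b where "b \<in> B" "act (x z) b = x j"
      using x by (auto simp: constrained_def)
    thus ?thesis using gens_in_box by blast
  next
    case False
    then obtain b where "b \<in> B" "act (x j) b = x z"
      using zj x by (auto simp: constrained_def)
    thus ?thesis
      using act_inverse[OF xV(3)] gens_in_box in_box_uminus by metis
  qed
  then obtain b where "in_box m 1 b" "act (x z) b = x j" by blast
  thus ?case
    using v act_add[OF xV(1)] in_box_add by (metis Suc_eq_plus1)
qed

lemma root_offset_in_box:
  assumes "F \<subseteq> index_pairs n" "x \<in> constrained n F" "i < n"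
  shows "\<exists>v. in_box m (n * n) v \<and> act (x (comp_root F i)) v = x i"
proof -
  obtain l where "l \<le> n * n" "(comp_root F i, i) \<in> (F \<union> F\<inverse>) ^^ l"
    using linked_by_short_path[OF assms(1) comp_root_linked] by blast
  moreover have "comp_root F i < n"
    using comp_root_le[of F i] assms(3) by linarith
  ultimately show ?thesis
    using path_in_box[OF assms(1,2)] in_box_mono by blast
qed

lemma tuple_of_in_constrained:
  assumes y: "y \<in> comp_roots n F \<rightarrow>\<^sub>E V" and w: "w \<in> offsets m n B F" and F: "F \<subseteq> index_pairs n"
  shows "tuple_of n F y w \<in> constrained n F"
proof -
  have yV: "y (comp_root F i) \<in> V" if "i < n" for i
    using y comp_root_in_roots[OF that] by auto
  have "\<exists>b\<in>B. act (tuple_of n F y w i) b = tuple_of n F y w j" if ij: "(i, j) \<in> F" for i j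
  proof -
    obtain b where b: "b \<in> B" "\<forall>r<m. w j r = w i r + b r"
      using w ij by (auto simp: offsets_def)
    have "i < n" "j < n"
      using ij F by (auto simp: index_pairs_def)
    hence "act (tuple_of n F y w i) b = tuple_of n F y w j"
      using yV act_add comp_root_edge[OF ij] act_cong[of "\<lambda>r. w i r + b r" "w j"] b(2)
      by (simp add: tuple_of_def)
    thus ?thesis using b(1) by blast
  qed
  moreover have "tuple_of n F y w \<in> {..<n} \<rightarrow>\<^sub>E V"
    using yV act_in by (auto simp: tuple_of_def)
  ultimately show ?thesis
    by (auto simp: constrained_def)
qed

lemma tuple_of_root:
  assumes "y \<in> comp_roots n F \<rightarrow>\<^sub>E V" "w \<in> offsets m n B F" "r \<in> comp_roots n F"
  shows "tuple_of n F y w r = y r"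
proof -
  have "r < n" "comp_root F r = r" "y r \<in> V" "\<forall>q<m. w r q = 0"
    using assms by (auto simp: offsets_def comp_roots_def)
  thus ?thesis
    by (simp add: tuple_of_def act_trivial)
qed

lemma tuple_of_eqD:
  assumes "n * n \<le> M"
    and y: "y \<in> comp_roots n F \<rightarrow>\<^sub>E V" and w: "w \<in> offsets m n B F"
    and y': "y' \<in> comp_roots n F \<rightarrow>\<^sub>E V" and w': "w' \<in> offsets m n B F"
    and eq: "tuple_of n F y w = tuple_of n F y' w'"
  shows "y = y' \<and> w = w'"
proof
  show "y = y'"
    using y y' tuple_of_root[OF y w] tuple_of_root[OF y' w'] eq by (metis PiE_ext)
  show "w = w'"
  proof (rule PiE_ext)
    show "w \<in> {..<n} \<rightarrow>\<^sub>E ({..<m} \<rightarrow>\<^sub>E {- int (n * n)..int (n * n)})"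
      "w' \<in> {..<n} \<rightarrow>\<^sub>E ({..<m} \<rightarrow>\<^sub>E {- int (n * n)..int (n * n)})"
      using w w' by (auto simp: offsets_def)
    fix i assume "i \<in> {..<n}"
    hence i: "i < n" by simp
    have "act (y (comp_root F i)) (w i) = act (y (comp_root F i)) (w' i)"
      using fun_cong[OF eq, of i] \<open>y = y'\<close> i by (simp add: tuple_of_def)
    moreover have "y (comp_root F i) \<in> V"
      using y comp_root_in_roots[OF i] by auto
    ultimately have "\<forall>r<m. w i r = w' i r"
      using act_free offsets_in_box[OF w i] offsets_in_box[OF w' i] in_box_mono[OF _ assms(1)] by blast
    moreover have "w i \<in> {..<m} \<rightarrow>\<^sub>E UNIV" "w' i \<in> {..<m} \<rightarrow>\<^sub>E UNIV"
      using w w' i by (auto simp: offsets_def)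
    ultimately show "w i = w' i"
      by (intro PiE_ext) auto
  qed
qed

lemma act_step_offset:
  assumes x: "x \<in> V" and v: "in_box m c v" and u: "in_box m c u" and c: "c < M"
    and b: "b \<in> B" and step: "act (act x v) b = act x u"
  shows "\<forall>r<m. u r = v r + b r"
proof -
  have "in_box m M (\<lambda>r. v r + b r)" "in_box m M u"
    using in_box_mono[OF in_box_add[OF v gens_in_box[OF b]]] in_box_mono[OF u] c by simp_all
  moreover have "act x (\<lambda>r. v r + b r) = act x u"
    using step act_add[OF x] by simp
  ultimately show ?thesis
    using act_free[OF x] by force
qed

lemma offsets_of_constrained:
  assumes F: "F \<subseteq> index_pairs n" and M: "n * n < M" and x: "x \<in> constrained n F"
  shows "\<exists>w\<in>offsets m n B F. \<forall>i<n. act (x (comp_root F i)) (w i) = x i"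
proof -
  obtain v where v: "\<And>i. i < n \<Longrightarrow> in_box m (n * n) (v i) \<and> act (x (comp_root F i)) (v i) = x i"
    using root_offset_in_box[OF F x] by metis
  define w where "w = (\<lambda>i\<in>{..<n}. \<lambda>r\<in>{..<m}. v i r)"
  have xV: "x i \<in> V" if "i < n" for i
    using x that by (auto simp: constrained_def)
  have act_w: "act (x (comp_root F i)) (w i) = x i" and box: "in_box m (n * n) (w i)" if "i < n" for i
    using v[OF that] act_cong[of "w i" "v i"] that by (auto simp: w_def in_box_def)
  have root: "\<forall>r<m. w i r = 0" if "i \<in> comp_roots n F" for i
  proof -
    have i: "i < n" "comp_root F i = i"
      using that by (auto simp: comp_roots_def)
    hence "act (x i) (w i) = act (x i) (\<lambda>_. 0)"
      using act_w[OF i(1)] act_zero[OF xV[OF i(1)]] by simp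
    thus ?thesis
      using act_free[OF xV[OF i(1)] in_box_mono[OF box[OF i(1)]] in_box_zero] M by simp
  qed
  have edge: "\<exists>b\<in>B. \<forall>r<m. w j r = w i r + b r" if ij: "(i, j) \<in> F" for i j
  proof -
    obtain b where b: "b \<in> B" "act (x i) b = x j"
      using x ij by (auto simp: constrained_def)
    have ijn: "i < n" "j < n"
      using ij F by (auto simp: index_pairs_def)
    hence "act (act (x (comp_root F i)) (w i)) b = act (x (comp_root F i)) (w j)"
      using act_w[OF ijn(1)] act_w[OF ijn(2)] b(2) comp_root_edge[OF ij] by simp
    moreover have "x (comp_root F i) \<in> V"
      using xV comp_root_le[of F i] ijn by simp
    ultimately show ?thesis
      using act_step_offset[OF _ box[OF ijn(1)] box[OF ijn(2)] M b(1)] b(1) by blast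
  qed
  have "w \<in> {..<n} \<rightarrow>\<^sub>E ({..<m} \<rightarrow>\<^sub>E {- int (n * n)..int (n * n)})"
    using v by (force simp: w_def in_box_def PiE_iff abs_le_iff)
  hence "w \<in> offsets m n B F"
    using root edge by (auto simp: offsets_def)
  thus ?thesis
    using act_w by blast
qed

lemma card_constrained:
  assumes F: "F \<subseteq> index_pairs n" and M: "n * n < M"
  shows "card (constrained n F) = card V ^ card (comp_roots n F) * card (offsets m n B F)"
proof -
  let ?D = "(comp_roots n F \<rightarrow>\<^sub>E V) \<times> offsets m n B F"
  have "bij_betw (\<lambda>(y, w). tuple_of n F y w) ?D (constrained n F)"
  proof (rule bij_betw_imageI)
    show "inj_on (\<lambda>(y, w). tuple_of n F y w) ?D"
      using tuple_of_eqD M by (intro inj_onI) (auto, (meson less_imp_le)+)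
    show "(\<lambda>(y, w). tuple_of n F y w) ` ?D = constrained n F"
    proof (intro equalityI subsetI)
      fix x assume "x \<in> (\<lambda>(y, w). tuple_of n F y w) ` ?D"
      thus "x \<in> constrained n F"
        using tuple_of_in_constrained F by auto
    next
      fix x assume x: "x \<in> constrained n F"
      then obtain w where w: "w \<in> offsets m n B F" "\<forall>i<n. act (x (comp_root F i)) (w i) = x i"
        using offsets_of_constrained[OF F M] by blast
      define y where "y = restrict x (comp_roots n F)"
      have "y \<in> comp_roots n F \<rightarrow>\<^sub>E V"
        using x by (auto simp: y_def constrained_def comp_roots_def)
      moreover have "tuple_of n F y w = x"
        using x w comp_root_in_roots
        by (intro ext) (auto simp: tuple_of_def y_def constrained_def PiE_iff extensional_def)
      ultimately show "x \<in> (\<lambda>(y, w). tuple_of n F y w) ` ?D"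
        using w(1) by force
    qed
  qed
  hence "card (constrained n F) = card (comp_roots n F \<rightarrow>\<^sub>E V) * card (offsets m n B F)"
    by (metis bij_betw_same_card card_cartesian_product)
  thus ?thesis
    by (simp add: card_PiE finite_comp_roots)
qed

end

section \<open>Multiplication by a^v modulo a prime\<close>

text \<open>For an exponent vector v, a^v = pow_pos a m v / pow_neg a m v.\<close>

definition pow_pos :: "(nat \<Rightarrow> nat) \<Rightarrow> nat \<Rightarrow> (nat \<Rightarrow> int) \<Rightarrow> nat" where
  "pow_pos a m v = (\<Prod>r<m. a r ^ nat (v r))"

definition pow_neg :: "(nat \<Rightarrow> nat) \<Rightarrow> nat \<Rightarrow> (nat \<Rightarrow> int) \<Rightarrow> nat" where
  "pow_neg a m v = (\<Prod>r<m. a r ^ nat (- v r))"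

lemma pow_pos_cong: "(\<And>r. r < m \<Longrightarrow> v r = u r) \<Longrightarrow> pow_pos a m v = pow_pos a m u"
  and pow_neg_cong: "(\<And>r. r < m \<Longrightarrow> v r = u r) \<Longrightarrow> pow_neg a m v = pow_neg a m u"
  by (auto simp: pow_pos_def pow_neg_def intro!: prod.cong)

lemma pow_pos_restrict: "pow_pos a m (restrict v {..<m}) = pow_pos a m v"
  and pow_neg_restrict: "pow_neg a m (restrict v {..<m}) = pow_neg a m v"
  by (simp_all add: pow_pos_def pow_neg_def)

lemma pow_pos_zero: "pow_pos a m (\<lambda>_. 0) = 1"
  and pow_neg_zero: "pow_neg a m (\<lambda>_. 0) = 1"
  by (simp_all add: pow_pos_def pow_neg_def)

lemma pow_pos_neg_add:
  "pow_pos a m v * pow_pos a m u * pow_neg a m (\<lambda>r. v r + u r)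
     = pow_pos a m (\<lambda>r. v r + u r) * pow_neg a m v * pow_neg a m u"
proof -
  have "a r ^ nat (v r) * a r ^ nat (u r) * a r ^ nat (- (v r + u r))
      = a r ^ nat (v r + u r) * a r ^ nat (- v r) * a r ^ nat (- u r)" for r
  proof -
    have "nat (v r) + nat (u r) + nat (- (v r + u r)) = nat (v r + u r) + nat (- v r) + nat (- u r)"
      by arith
    thus ?thesis by (metis power_add)
  qed
  thus ?thesis
    unfolding pow_pos_def pow_neg_def by (simp add: prod.distrib[symmetric])
qed

lemma pow_pos_unit: "r0 < m \<Longrightarrow> pow_pos a m (\<lambda>r. if r = r0 then c else 0) = a r0 ^ nat c"
  and pow_neg_unit: "r0 < m \<Longrightarrow> pow_neg a m (\<lambda>r. if r = r0 then c else 0) = a r0 ^ nat (- c)"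
  by (simp_all add: pow_pos_def pow_neg_def if_distrib prod.If_cases Int_absorb1 cong: if_cong)

definition box_separated :: "(nat \<Rightarrow> nat) \<Rightarrow> nat \<Rightarrow> nat \<Rightarrow> nat \<Rightarrow> bool" where
  "box_separated a m M p \<longleftrightarrow> (\<forall>v u. in_box m M v \<longrightarrow> in_box m M u \<longrightarrow>
     [pow_pos a m v * pow_neg a m u = pow_pos a m u * pow_neg a m v] (mod p) \<longrightarrow> (\<forall>r<m. v r = u r))"

text \<open>i a^v modulo p, the denominator being inverted by Fermat's little theorem.\<close>

definition mult_pow_mod :: "(nat \<Rightarrow> nat) \<Rightarrow> nat \<Rightarrow> nat \<Rightarrow> (nat \<Rightarrow> int) \<Rightarrow> nat \<Rightarrow> nat" where
  "mult_pow_mod a m p v i = i * pow_pos a m v * pow_neg a m v ^ (p - 2) mod p"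

lemma mult_pow_mod_vec_cong:
  "(\<And>r. r < m \<Longrightarrow> v r = u r) \<Longrightarrow> mult_pow_mod a m p v i = mult_pow_mod a m p u i"
  unfolding mult_pow_mod_def using pow_pos_cong pow_neg_cong by metis

locale prime_modulus =
  fixes a :: "nat \<Rightarrow> nat" and m p :: nat
  assumes prime: "prime p"
    and not_dvd_gens: "\<And>r. r < m \<Longrightarrow> \<not> p dvd a r"
begin

lemma not_dvd_pow_pos: "\<not> p dvd pow_pos a m v"
  and not_dvd_pow_neg: "\<not> p dvd pow_neg a m v"
  using prime not_dvd_gens
  by (auto simp: pow_pos_def pow_neg_def prime_dvd_prod_iff dest: prime_dvd_power)

lemma coprime_pow_neg: "coprime (pow_neg a m v) p"
  using prime_imp_coprime[OF prime not_dvd_pow_neg] by (simp add: coprime_commute)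

lemma mult_pow_mod_less: "mult_pow_mod a m p v i < p"
  using prime_gt_0_nat[OF prime] by (simp add: mult_pow_mod_def)

lemma mult_pow_mod_cong: "[mult_pow_mod a m p v i * pow_neg a m v = i * pow_pos a m v] (mod p)"
proof -
  let ?c = "pow_neg a m v" and ?x = "i * pow_pos a m v"
  have "[mult_pow_mod a m p v i * ?c = ?x * ?c ^ (p - 2) * ?c] (mod p)"
    unfolding mult_pow_mod_def cong_def by (simp add: mod_mult_left_eq)
  also have "p - 1 = Suc (p - 2)"
    using prime_ge_2_nat[OF prime] by simp
  hence "?x * ?c ^ (p - 2) * ?c = ?x * ?c ^ (p - 1)"
    by (simp only: power_Suc2 mult.assoc)
  also have "[?x * ?c ^ (p - 1) = ?x * 1] (mod p)"
    using fermat_theorem[OF prime not_dvd_pow_neg] by (rule cong_scalar_left)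
  finally show ?thesis by simp
qed

lemma mult_pow_mod_iff:
  assumes "j < p"
  shows "mult_pow_mod a m p v i = j \<longleftrightarrow> [j * pow_neg a m v = i * pow_pos a m v] (mod p)"
proof
  assume "[j * pow_neg a m v = i * pow_pos a m v] (mod p)"
  hence "[j * pow_neg a m v = mult_pow_mod a m p v i * pow_neg a m v] (mod p)"
    using mult_pow_mod_cong by (metis cong_sym cong_trans)
  hence "[j = mult_pow_mod a m p v i] (mod p)"
    using cong_mult_rcancel_nat[OF coprime_pow_neg] by blast
  thus "mult_pow_mod a m p v i = j"
    using cong_less_modulus_unique_nat assms mult_pow_mod_less by metis
qed (use mult_pow_mod_cong in blast)

lemma mult_pow_mod_not_dvd:
  assumes "\<not> p dvd i"
  shows "mult_pow_mod a m p v i \<noteq> 0"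
proof
  assume "mult_pow_mod a m p v i = 0"
  hence "[0 = i * pow_pos a m v] (mod p)"
    using mult_pow_mod_cong by (metis mult_zero_left)
  hence "p dvd i * pow_pos a m v"
    by (metis cong_0_iff cong_sym)
  thus False
    using assms not_dvd_pow_pos prime by (simp add: prime_dvd_mult_iff)
qed

lemma mult_pow_mod_zero: "i < p \<Longrightarrow> mult_pow_mod a m p (\<lambda>_. 0) i = i"
  by (simp add: mult_pow_mod_iff pow_pos_zero pow_neg_zero)

lemma mult_pow_mod_add:
  "mult_pow_mod a m p u (mult_pow_mod a m p v i) = mult_pow_mod a m p (\<lambda>r. v r + u r) i"
proof -
  let ?j = "mult_pow_mod a m p v i" and ?w = "\<lambda>r. v r + u r"
  let ?k = "mult_pow_mod a m p u ?j"
  have "[?k * pow_neg a m ?w * (pow_neg a m v * pow_neg a m u)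
        = (?k * pow_neg a m u) * (pow_neg a m v * pow_neg a m ?w)] (mod p)"
    by (simp add: ac_simps)
  also have "[(?k * pow_neg a m u) * (pow_neg a m v * pow_neg a m ?w)
        = (?j * pow_pos a m u) * (pow_neg a m v * pow_neg a m ?w)] (mod p)"
    using mult_pow_mod_cong by (rule cong_mult) simp
  also have "(?j * pow_pos a m u) * (pow_neg a m v * pow_neg a m ?w)
      = (?j * pow_neg a m v) * (pow_pos a m u * pow_neg a m ?w)"
    by (simp add: ac_simps)
  also have "[(?j * pow_neg a m v) * (pow_pos a m u * pow_neg a m ?w)
        = (i * pow_pos a m v) * (pow_pos a m u * pow_neg a m ?w)] (mod p)"
    using mult_pow_mod_cong by (rule cong_mult) simp
  also have "(i * pow_pos a m v) * (pow_pos a m u * pow_neg a m ?w)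
      = i * pow_pos a m ?w * (pow_neg a m v * pow_neg a m u)"
    using pow_pos_neg_add[of a m v u] by (simp add: ac_simps)
  finally have "[?k * pow_neg a m ?w = i * pow_pos a m ?w] (mod p)"
    using cong_mult_rcancel_nat coprime_pow_neg by (metis coprime_mult_left_iff)
  hence "mult_pow_mod a m p ?w i = ?k"
    using mult_pow_mod_iff[OF mult_pow_mod_less] by blast
  thus ?thesis by simp
qed

lemma mult_pow_mod_eqD:
  assumes "\<not> p dvd i" and eq: "mult_pow_mod a m p v i = mult_pow_mod a m p u i"
  shows "[pow_pos a m v * pow_neg a m u = pow_pos a m u * pow_neg a m v] (mod p)"
proof -
  let ?j = "mult_pow_mod a m p v i"
  have "[i * (pow_pos a m v * pow_neg a m u) = (?j * pow_neg a m v) * pow_neg a m u] (mod p)"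
    using cong_scalar_right[OF cong_sym[OF mult_pow_mod_cong[of v i]], of "pow_neg a m u"]
    by (simp add: ac_simps)
  also have "(?j * pow_neg a m v) * pow_neg a m u = (?j * pow_neg a m u) * pow_neg a m v"
    by (simp add: ac_simps)
  also have "[(?j * pow_neg a m u) * pow_neg a m v = (i * pow_pos a m u) * pow_neg a m v] (mod p)"
    using cong_scalar_right[OF mult_pow_mod_cong[of u i], of "pow_neg a m v"] eq by simp
  finally have "[i * (pow_pos a m v * pow_neg a m u) = i * (pow_pos a m u * pow_neg a m v)] (mod p)"
    by (simp add: ac_simps)
  thus ?thesis
    using cong_mult_lcancel_nat prime_imp_coprime[OF prime assms(1)] by (metis coprime_commute)
qed

end

section \<open>The action on G(a,k_1) + ... + G(a,k_s)\<close>

definition union_act :: "(nat \<Rightarrow> nat) \<Rightarrow> nat \<Rightarrow> (nat \<Rightarrow> nat) \<Rightarrow> nat \<times> nat \<Rightarrow> (nat \<Rightarrow> int) \<Rightarrow> nat \<times> nat" where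
  "union_act a m k x v = (fst x, mult_pow_mod a m (k (fst x) + 1) v (snd x))"

definition unit_steps :: "nat \<Rightarrow> (nat \<Rightarrow> int) set" where
  "unit_steps m = insert (\<lambda>_. 0) {\<lambda>r. if r = r0 then c else 0 | r0 c. r0 < m \<and> (c = 1 \<or> c = -1)}"

lemma unit_steps_in_box: "b \<in> unit_steps m \<Longrightarrow> in_box m 1 b"
  by (auto simp: unit_steps_def in_box_def)

lemma union_verts_iff: "x \<in> union_verts k s \<longleftrightarrow> fst x < s \<and> 0 < snd x \<and> snd x < k (fst x) + 1"
  by (cases x) (auto simp: union_verts_def)

lemma finite_union_verts: "finite (union_verts k s)"
  by (rule finite_subset[of _ "{..<s} \<times> {..Max (k ` {..<s})}"])
    (auto simp: union_verts_def intro: order.trans[OF _ Max_ge])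

lemma card_union_verts: "card (union_verts k s) = (\<Sum>t<s. k t)"
proof -
  have "union_verts k s = Sigma {..<s} (\<lambda>t. {1..k t})"
    by (auto simp: union_verts_def)
  thus ?thesis by simp
qed

lemma union_adj_sym: "union_adj A k v w \<Longrightarrow> union_adj A k w v"
  by (auto simp: union_adj_def G_adj_def)

lemma union_adj_irrefl: "\<not> union_adj A k v v"
  by (simp add: union_adj_def G_adj_def)

definition indep_poly :: "nat \<Rightarrow> nat \<Rightarrow> rat poly" where
  "indep_poly m n = (\<Sum>F\<in>Pow (index_pairs n).
     smult (of_int ((-1) ^ card F * int (card (offsets m n (unit_steps m) F))) / fact n)
       (monom 1 (card (comp_roots n F))))"

lemma fact_mult_poly_indep_poly:
  "fact n * poly (indep_poly m n) x = (\<Sum>F\<in>Pow (index_pairs n).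
     of_int ((-1) ^ card F * int (card (offsets m n (unit_steps m) F))) * x ^ card (comp_roots n F))"
  by (simp add: indep_poly_def poly_sum poly_monom sum_distrib_left)

locale prime_union =
  fixes a :: "nat \<Rightarrow> nat" and m :: nat and k :: "nat \<Rightarrow> nat" and s :: nat
  assumes prime_orders: "\<And>t. t < s \<Longrightarrow> prime (k t + 1)"
    and not_dvd_gens: "\<And>t r. t < s \<Longrightarrow> r < m \<Longrightarrow> \<not> (k t + 1) dvd a r"
begin

lemma prime_modulus_at: "fst x < s \<Longrightarrow> prime_modulus a m (k (fst x) + 1)"
  using prime_orders not_dvd_gens by unfold_locales

lemma union_act_in:
  assumes x: "x \<in> union_verts k s"
  shows "union_act a m k x v \<in> union_verts k s"
proof -
  interpret prime_modulus a m "k (fst x) + 1"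
    using x by (intro prime_modulus_at) (simp add: union_verts_iff)
  have "\<not> k (fst x) + 1 dvd snd x"
    using x by (auto simp: union_verts_iff dest: dvd_imp_le)
  thus ?thesis
    using x mult_pow_mod_less mult_pow_mod_not_dvd by (simp add: union_act_def union_verts_iff)
qed

lemma union_act_eq_iff:
  assumes x: "x \<in> union_verts k s" and y: "y \<in> union_verts k s"
  shows "union_act a m k x v = y \<longleftrightarrow>
    fst y = fst x \<and> [snd y * pow_neg a m v = snd x * pow_pos a m v] (mod k (fst x) + 1)"
proof -
  interpret prime_modulus a m "k (fst x) + 1"
    using x by (intro prime_modulus_at) (simp add: union_verts_iff)
  show ?thesis
    using y mult_pow_mod_iff[of "snd y"] by (auto simp: union_act_def union_verts_iff prod_eq_iff)
qed

lemma union_act_locally_free: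
  assumes sep: "\<And>t. t < s \<Longrightarrow> box_separated a m M (k t + 1)"
  shows "locally_free_action (union_verts k s) (union_act a m k) m M (unit_steps m)"
proof
  fix x v assume "x \<in> union_verts k s"
  thus "union_act a m k x v \<in> union_verts k s"
    by (rule union_act_in)
next
  fix v u :: "nat \<Rightarrow> int" and x
  assume "\<And>r. r < m \<Longrightarrow> v r = u r"
  hence "mult_pow_mod a m (k (fst x) + 1) v (snd x) = mult_pow_mod a m (k (fst x) + 1) u (snd x)"
    by (rule mult_pow_mod_vec_cong)
  thus "union_act a m k x v = union_act a m k x u"
    by (simp add: union_act_def)
next
  fix b assume "b \<in> unit_steps m"
  thus "in_box m 1 b"
    by (rule unit_steps_in_box)
next
  fix x assume x: "x \<in> union_verts k s"
  then interpret prime_modulus a m "k (fst x) + 1"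
    by (intro prime_modulus_at) (simp add: union_verts_iff)
  show "union_act a m k x (\<lambda>_. 0) = x"
    using x mult_pow_mod_zero by (simp add: union_act_def union_verts_iff)
  show "union_act a m k (union_act a m k x v) u = union_act a m k x (\<lambda>r. v r + u r)" for v u
    using mult_pow_mod_add by (simp add: union_act_def)
  show "\<forall>r<m. v r = u r"
    if "in_box m M v" "in_box m M u" "union_act a m k x v = union_act a m k x u" for v u
  proof -
    have "\<not> k (fst x) + 1 dvd snd x"
      using x by (auto simp: union_verts_iff dest: dvd_imp_le)
    hence "[pow_pos a m v * pow_neg a m u = pow_pos a m u * pow_neg a m v] (mod k (fst x) + 1)"
      using that(3) mult_pow_mod_eqD by (simp add: union_act_def)
    moreover have "fst x < s"
      using x by (simp add: union_verts_iff)
    ultimately show ?thesis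
      using sep that(1,2) by (simp add: box_separated_def)
  qed
qed

lemma unit_step_of_closed_adj:
  assumes A: "A = a ` {..<m}" and u: "u \<in> union_verts k s" and w: "w \<in> union_verts k s"
    and adj: "u = w \<or> union_adj A k u w"
  shows "\<exists>b\<in>unit_steps m. union_act a m k u b = w"
  using adj
proof
  assume "u = w"
  thus ?thesis
    using union_act_eq_iff[OF u w, of "\<lambda>_. 0"] by (auto simp: unit_steps_def pow_pos_zero pow_neg_zero)
next
  let ?p = "k (fst u) + 1" and ?e = "\<lambda>r0 c r. if r = r0 then c else (0::int)"
  assume "union_adj A k u w"
  then obtain r0 where r0: "r0 < m" and "fst w = fst u"
    and "[snd u = a r0 * snd w] (mod ?p) \<or> [snd w = a r0 * snd u] (mod ?p)"
    using A by (auto simp: union_adj_def G_adj_def)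
  hence "union_act a m k u (?e r0 (-1)) = w \<or> union_act a m k u (?e r0 1) = w"
    using union_act_eq_iff[OF u w] by (auto simp: pow_pos_unit pow_neg_unit cong_sym_eq mult.commute)
  moreover have "?e r0 (-1) \<in> unit_steps m" "?e r0 1 \<in> unit_steps m"
    using r0 by (auto simp: unit_steps_def)
  ultimately show ?thesis by blast
qed

lemma closed_adj_of_unit_step:
  assumes A: "A = a ` {..<m}" and u: "u \<in> union_verts k s" and w: "w \<in> union_verts k s"
    and b: "b \<in> unit_steps m" and step: "union_act a m k u b = w"
  shows "u = w \<or> union_adj A k u w"
proof (cases "u = w")
  case False
  let ?p = "k (fst u) + 1"
  have fst_eq: "fst w = fst u" and cong: "[snd w * pow_neg a m b = snd u * pow_pos a m b] (mod ?p)"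
    using step union_act_eq_iff[OF u w] by blast+
  hence "snd u \<noteq> snd w"
    using False by (simp add: prod_eq_iff)
  moreover have "b \<noteq> (\<lambda>_. 0)"
  proof
    assume "b = (\<lambda>_. 0)"
    hence "[snd w = snd u] (mod ?p)"
      using cong by (simp add: pow_pos_zero pow_neg_zero)
    moreover have "snd w < ?p" "snd u < ?p"
      using u w fst_eq by (auto simp: union_verts_iff)
    ultimately show False
      using \<open>snd u \<noteq> snd w\<close> cong_less_modulus_unique_nat by metis
  qed
  then obtain r0 c where r0: "r0 < m" and "c = 1 \<or> c = -1" and "b = (\<lambda>r. if r = r0 then c else 0)"
    using b by (auto simp: unit_steps_def)
  hence "[snd w = a r0 * snd u] (mod ?p) \<or> [snd u = a r0 * snd w] (mod ?p)"
    using cong by (auto simp: pow_pos_unit pow_neg_unit cong_sym_eq mult.commute)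
  ultimately have "union_adj A k u w"
    using A r0 u w fst_eq by (auto simp: union_adj_def G_adj_def union_verts_iff)
  thus ?thesis by blast
qed simp

lemma closed_adj_iff_unit_step:
  assumes "A = a ` {..<m}" "u \<in> union_verts k s" "w \<in> union_verts k s"
  shows "(u = w \<or> union_adj A k u w) \<longleftrightarrow> (\<exists>b\<in>unit_steps m. union_act a m k u b = w)"
  using unit_step_of_closed_adj[OF assms] closed_adj_of_unit_step[OF assms] by blast

lemma fact_mult_num_indep_sets:
  assumes A: "A = a ` {..<m}"
    and sep: "\<And>t. t < s \<Longrightarrow> box_separated a m (n * n + 1) (k t + 1)"
  shows "int (fact n * num_indep_sets A k s n)
    = (\<Sum>F\<in>Pow (index_pairs n). (-1) ^ card F *
         int ((\<Sum>t<s. k t) ^ card (comp_roots n F) * card (offsets m n (unit_steps m) F)))"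
proof -
  interpret locally_free_action "union_verts k s" "union_act a m k" m "n * n + 1" "unit_steps m"
    using sep by (rule union_act_locally_free)
  have "{x \<in> {..<n} \<rightarrow>\<^sub>E union_verts k s. \<forall>(i, j)\<in>F. x i = x j \<or> union_adj A k (x i) (x j)}
      = constrained n F" if "F \<subseteq> index_pairs n" for F
    unfolding constrained_def
  proof (intro Collect_cong conj_cong refl)
    fix x assume x: "x \<in> {..<n} \<rightarrow>\<^sub>E union_verts k s"
    have "(x i = x j \<or> union_adj A k (x i) (x j)) \<longleftrightarrow> (\<exists>b\<in>unit_steps m. union_act a m k (x i) b = x j)"
      if "(i, j) \<in> F" for i j
    proof (rule closed_adj_iff_unit_step[OF A])
      have "i < n" "j < n"
        using that \<open>F \<subseteq> index_pairs n\<close> by (auto simp: index_pairs_def)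
      thus "x i \<in> union_verts k s" "x j \<in> union_verts k s"
        using x by auto
    qed
    thus "(\<forall>(i, j)\<in>F. x i = x j \<or> union_adj A k (x i) (x j))
        \<longleftrightarrow> (\<forall>(i, j)\<in>F. \<exists>b\<in>unit_steps m. union_act a m k (x i) b = x j)"
      by blast
  qed
  hence "card {x \<in> {..<n} \<rightarrow>\<^sub>E union_verts k s. \<forall>(i, j)\<in>F. x i = x j \<or> union_adj A k (x i) (x j)}
      = (\<Sum>t<s. k t) ^ card (comp_roots n F) * card (offsets m n (unit_steps m) F)"
    if "F \<in> Pow (index_pairs n)" for F
    using that card_constrained card_union_verts by simp
  thus ?thesis
    unfolding num_indep_sets_def
    using fact_mult_card_indep_sets[where adj = "union_adj A k" and n = n,
        OF finite_union_verts union_adj_sym union_adj_irrefl]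
    by simp
qed

lemma num_indep_sets_eq_poly:
  assumes A: "A = a ` {..<m}"
    and sep: "\<And>t. t < s \<Longrightarrow> box_separated a m (n * n + 1) (k t + 1)"
  shows "of_nat (num_indep_sets A k s n) = poly (indep_poly m n) (of_nat (\<Sum>t<s. k t))"
proof -
  have "fact n * (of_nat (num_indep_sets A k s n) :: rat)
      = of_int (int (fact n * num_indep_sets A k s n))"
    by simp
  also have "\<dots> = fact n * poly (indep_poly m n) (of_nat (\<Sum>t<s. k t))"
    using fact_mult_num_indep_sets[OF A sep]
    unfolding fact_mult_poly_indep_poly
    by (simp add: of_int_sum ac_simps)
  finally show ?thesis
    by simp
qed

end

section \<open>Large primes\<close>

lemma prod_powi_eq:
  "(\<Prod>r<m. (of_nat (a r) :: rat) powi v r) = of_nat (pow_pos a m v) / of_nat (pow_neg a m v)"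
proof -
  have "(q :: rat) powi w = q ^ nat w / q ^ nat (- w)" for q w
    by (cases "w \<ge> 0") (auto simp: power_int_def power_inverse divide_inverse)
  thus ?thesis
    by (simp add: pow_pos_def pow_neg_def prod_dividef)
qed

lemma mult_indep_pow_eq:
  assumes ind: "mult_indep (a ` {..<m})" and inj: "inj_on a {..<m}" and pos: "\<And>r. r < m \<Longrightarrow> 0 < a r"
    and eq: "pow_pos a m v * pow_neg a m u = pow_pos a m u * pow_neg a m v"
  shows "\<forall>r<m. v r = u r"
proof -
  define e where "e x = v (the_inv_into {..<m} a x) - u (the_inv_into {..<m} a x)" for x
  have e_a: "e (a r) = v r - u r" if "r < m" for r
    using the_inv_into_f_f[OF inj] that by (simp add: e_def)
  have nonzero: "pow_neg a m v \<noteq> 0" "pow_neg a m u \<noteq> 0" "pow_pos a m u \<noteq> 0"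
    using pos by (auto simp: pow_pos_def pow_neg_def)
  have "(\<Prod>x\<in>a ` {..<m}. (of_nat x :: rat) powi e x) = (\<Prod>r<m. (of_nat (a r) :: rat) powi (v r - u r))"
    using e_a by (simp add: prod.reindex[OF inj])
  also have "\<dots> = (\<Prod>r<m. (of_nat (a r) :: rat) powi v r) / (\<Prod>r<m. (of_nat (a r) :: rat) powi u r)"
    using pos by (simp add: power_int_diff prod_dividef)
  also have "\<dots> = 1"
    using eq nonzero unfolding prod_powi_eq
    by (simp add: field_simps flip: of_nat_mult)
  finally have "\<forall>x\<in>a ` {..<m}. e x = 0"
    using ind unfolding mult_indep_def by blast
  thus ?thesis
    using e_a by auto
qed

lemma cong_imp_eq_large_modulus:
  fixes S :: "(nat \<times> nat) set"
  assumes "finite S"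
  shows "\<exists>N. \<forall>p>N. \<forall>(x, y)\<in>S. [x = y] (mod p) \<longrightarrow> x = y"
proof -
  define N where "N = (\<Sum>(x, y)\<in>S. x + y)"
  have "x + y \<le> N" if "(x, y) \<in> S" for x y
    using member_le_sum[OF that, of "\<lambda>(x, y). x + y"] assms by (simp add: N_def)
  hence "\<forall>p>N. \<forall>(x, y)\<in>S. [x = y] (mod p) \<longrightarrow> x = y"
    using cong_less_modulus_unique_nat by fastforce
  thus ?thesis by blast
qed

lemma box_cong_imp_eq_large_modulus:
  "\<exists>N. \<forall>p>N. \<forall>v u. in_box m M v \<longrightarrow> in_box m M u \<longrightarrow>
     [pow_pos a m v * pow_neg a m u = pow_pos a m u * pow_neg a m v] (mod p) \<longrightarrow>
     pow_pos a m v * pow_neg a m u = pow_pos a m u * pow_neg a m v"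
proof -
  define Box where "Box = {..<m} \<rightarrow>\<^sub>E {- int M..int M}"
  define S where "S = (\<lambda>(v, u). (pow_pos a m v * pow_neg a m u, pow_pos a m u * pow_neg a m v)) ` (Box \<times> Box)"
  have "finite S"
    by (simp add: S_def Box_def finite_PiE)
  then obtain N where N: "\<forall>p>N. \<forall>(x, y)\<in>S. [x = y] (mod p) \<longrightarrow> x = y"
    using cong_imp_eq_large_modulus by blast
  have "(pow_pos a m v * pow_neg a m u, pow_pos a m u * pow_neg a m v) \<in> S"
    if "in_box m M v" "in_box m M u" for v u
  proof -
    have "restrict v {..<m} \<in> Box" "restrict u {..<m} \<in> Box"
      using that by (auto simp: Box_def in_box_def abs_le_iff)
    moreover have "(pow_pos a m v * pow_neg a m u, pow_pos a m u * pow_neg a m v)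
        = (\<lambda>(v, u). (pow_pos a m v * pow_neg a m u, pow_pos a m u * pow_neg a m v))
            (restrict v {..<m}, restrict u {..<m})"
      by (simp add: pow_pos_restrict pow_neg_restrict)
    ultimately show ?thesis
      unfolding S_def by blast
  qed
  thus ?thesis
    using N by fastforce
qed

lemma separating_bound:
  assumes "mult_indep (a ` {..<m})" "inj_on a {..<m}" "\<And>r. r < m \<Longrightarrow> 0 < a r"
  shows "\<exists>N. \<forall>p>N. (\<forall>r<m. \<not> p dvd a r) \<and> box_separated a m M p"
proof -
  obtain N where N: "\<forall>p>N. \<forall>v u. in_box m M v \<longrightarrow> in_box m M u \<longrightarrow>
      [pow_pos a m v * pow_neg a m u = pow_pos a m u * pow_neg a m v] (mod p) \<longrightarrow>
      pow_pos a m v * pow_neg a m u = pow_pos a m u * pow_neg a m v"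
    using box_cong_imp_eq_large_modulus by blast
  have "\<not> p dvd a r" if "p > N + (\<Sum>r<m. a r)" "r < m" for p r
  proof -
    have "a r \<le> (\<Sum>r<m. a r)"
      using that(2) by (intro member_le_sum) auto
    hence "0 < a r" "a r < p"
      using that assms(3) by auto
    thus ?thesis
      by (auto dest: dvd_imp_le)
  qed
  moreover have "box_separated a m M p" if "p > N + (\<Sum>r<m. a r)" for p
  proof -
    have "N < p"
      using that by simp
    thus ?thesis
      using N mult_indep_pow_eq[OF assms] unfolding box_separated_def by blast
  qed
  ultimately show ?thesis
    by blast
qed

theorem theorem3p1:
  fixes m n :: nat
  assumes "m \<ge> 1"
  shows "\<exists>P :: rat poly. \<forall>A :: nat set.
           finite A \<and> card A = m \<and> (\<forall>x\<in>A. x \<ge> 2) \<and> mult_indep A \<longrightarrow>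
           (\<exists>N :: nat. \<forall>s \<ge> 1. \<forall>k :: nat \<Rightarrow> nat.
              (\<forall>t<s. k t > 0 \<and> prime (k t + 1) \<and> k t + 1 > N) \<longrightarrow>
              of_nat (num_indep_sets A k s n) = poly P (of_nat (\<Sum>t<s. k t)))"
proof (intro exI[of _ "indep_poly m n"] allI impI)
  fix A :: "nat set"
  assume A: "finite A \<and> card A = m \<and> (\<forall>x\<in>A. x \<ge> 2) \<and> mult_indep A"
  then obtain a where "bij_betw a {..<m} A"
    using ex_bij_betw_nat_finite[of A] by (auto simp: atLeast0LessThan)
  hence A_eq: "A = a ` {..<m}" and inj: "inj_on a {..<m}"
    by (auto simp: bij_betw_def)
  have "mult_indep (a ` {..<m})" "\<And>r. r < m \<Longrightarrow> 0 < a r"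
    using A A_eq by fastforce+
  then obtain N where N: "\<forall>p>N. (\<forall>r<m. \<not> p dvd a r) \<and> box_separated a m (n * n + 1) p"
    using separating_bound[OF _ inj] by blast
  show "\<exists>N. \<forall>s\<ge>1. \<forall>k. (\<forall>t<s. 0 < k t \<and> prime (k t + 1) \<and> N < k t + 1) \<longrightarrow>
      of_nat (num_indep_sets A k s n) = poly (indep_poly m n) (of_nat (\<Sum>t<s. k t))"
  proof (intro exI[of _ N] allI impI)
    fix s :: nat and k :: "nat \<Rightarrow> nat"
    assume k: "\<forall>t<s. 0 < k t \<and> prime (k t + 1) \<and> N < k t + 1"
    interpret prime_union a m k s
      using k N by unfold_locales auto
    show "of_nat (num_indep_sets A k s n) = poly (indep_poly m n) (of_nat (\<Sum>t<s. k t))"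
      using k N by (intro num_indep_sets_eq_poly[OF A_eq]) blast
  qed
qed

end
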